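(* For every $i\in\{1,\dots,n\}$, the collision-avoidance command $\mathbf p\mapsto v_i^{\mathrm{cv}}(\mathbf p)$ is locally Lipschitz on $\mathbb{R}^{dn}$.
   Context: $n\ge2$ robots with positions $p_i\in\mathbb{R}^d$, $\mathbf p=[p_1^\top,\dots,p_n^\top]^\top\in\mathbb{R}^{dn}$; sample points $q_1,\dots,q_m\in\mathbb{R}^d$; constants $\beta>0$, $\sigma_1>0$, $\sigma_2>0$, $\varepsilon\in(0,1)$, $r_{\mathrm{avoid}}>0$. Mass: $P_k(\mathbf p)=\frac1n\sum_{i=1}^n e^{-\beta\|q_k-p_i\|^2}$. Meanshift command: $v_i^{\mathrm{ms}}(\mathbf p)=\dfrac{\frac{\sigma_1}{m}\sum_{k=1}^m P_k(\mathbf p)^{-1}e^{-\beta\|q_k-p_i\|^2}(q_k-p_i)}{\sum_{k=1}^m P_k(\mathbf p)^{-1}e^{-\beta\|q_k-p_i\|^2}}$. Repulsive term: $\tilde v_i^{\mathrm{cv}}=\sigma_2\sum_{j\ne i,\ \|p_i-p_j\|\le r_{\mathrm{avoid}}}\frac{r_{\mathrm{avoid}}-\|p_i-p_j\|}{\|p_i-p_j\|+\varepsilon}(p_i-p_j)$. With $\varphi=\min\{\|v_i^{\mathrm{ms}}\|^2/\varepsilon,1\}$, the gain is $\kappa_2=\varphi$ if $(v_i^{\mathrm{ms}})^\top\tilde v_i^{\mathrm{cv}}\ge0$ and $\kappa_2=\varphi\min\{-(1-\varepsilon)\|v_i^{\mathrm{ms}}\|^2/((v_i^{\mathrm{ms}})^\top\tilde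 v_i^{\mathrm{cv}}),1\}$ if $(v_i^{\mathrm{ms}})^\top\tilde v_i^{\mathrm{cv}}<0$; collision-avoidance command $v_i^{\mathrm{cv}}=\kappa_2\tilde v_i^{\mathrm{cv}}$. *)

theory Defs
  imports "HOL-Analysis.Analysis"
begin

text \<open>Robots are indexed by a finite type 'n (n = CARD('n)), positions live in
  'a :: euclidean_space (R^d, d = DIM('a)); a configuration is p :: 'a ^ 'n (the
  stacked vector in R^(dn), with Euclidean norm). Sample points q are indexed by a
  finite type 'm (m = CARD('m)).\<close>

definition locally_lipschitz_on :: "'a::metric_space set \<Rightarrow> ('a \<Rightarrow> 'b::metric_space) \<Rightarrow> bool" where
  "locally_lipschitz_on X f \<longleftrightarrow>
     (\<forall>x\<in>X. \<exists>e>0. \<exists>L. L-lipschitz_on (cball x e \<inter> X) f)"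

definition mass :: "real \<Rightarrow> ('m::finite \<Rightarrow> 'a::euclidean_space) \<Rightarrow> 'a ^ 'n::finite \<Rightarrow> 'm \<Rightarrow> real" where
  "mass \<beta> q p k = (1 / real CARD('n)) * (\<Sum>i\<in>UNIV. exp (- \<beta> * (norm (q k - p $ i))\<^sup>2))"

definition v_ms :: "real \<Rightarrow> real \<Rightarrow> ('m::finite \<Rightarrow> 'a::euclidean_space) \<Rightarrow> 'a ^ 'n::finite \<Rightarrow> 'n \<Rightarrow> 'a" where
  "v_ms \<beta> \<sigma>1 q p i =
     (1 / (\<Sum>k\<in>UNIV. inverse (mass \<beta> q p k) * exp (- \<beta> * (norm (q k - p $ i))\<^sup>2))) *\<^sub>R
     ((\<sigma>1 / real CARD('m)) *\<^sub>R
       (\<Sum>k\<in>UNIV. (inverse (mass \<beta> q p k) * exp (- \<beta> * (norm (q k - p $ i))\<^sup>2)) *\<^sub>R (q k - p $ i)))"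

definition v_rep :: "real \<Rightarrow> real \<Rightarrow> real \<Rightarrow> 'a::euclidean_space ^ 'n::finite \<Rightarrow> 'n \<Rightarrow> 'a" where
  "v_rep \<sigma>2 \<epsilon> r p i =
     \<sigma>2 *\<^sub>R (\<Sum>j\<in>{j. j \<noteq> i \<and> norm (p $ i - p $ j) \<le> r}.
        ((r - norm (p $ i - p $ j)) / (norm (p $ i - p $ j) + \<epsilon>)) *\<^sub>R (p $ i - p $ j))"

definition kappa2 :: "real \<Rightarrow> 'a::real_inner \<Rightarrow> 'a \<Rightarrow> real" where
  "kappa2 \<epsilon> v w =
     (let \<phi> = min ((norm v)\<^sup>2 / \<epsilon>) 1 in
      if inner v w \<ge> 0 then \<phi>
      else \<phi> * min (- (1 - \<epsilon>) * (norm v)\<^sup>2 / inner v w) 1)"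

definition v_cv :: "real \<Rightarrow> real \<Rightarrow> real \<Rightarrow> real \<Rightarrow> real \<Rightarrow> ('m::finite \<Rightarrow> 'a::euclidean_space)
    \<Rightarrow> 'a ^ 'n::finite \<Rightarrow> 'n \<Rightarrow> 'a" where
  "v_cv \<beta> \<sigma>1 \<sigma>2 \<epsilon> r q p i =
     kappa2 \<epsilon> (v_ms \<beta> \<sigma>1 q p i) (v_rep \<sigma>2 \<epsilon> r p i) *\<^sub>R v_rep \<sigma>2 \<epsilon> r p i"

end

theory Submission
  imports Defs
begin

(* Local Lipschitz continuity is preserved by composition, pairing, sums, bounded bilinear maps
   (products, scalar multiplication, inner products) and quotients by positive functions, and
   holds for norms, exp and the cutoff t \<mapsto> max t 0; this covers the mass, the meanshift
   command and the repulsive term. The only delicate factor is the gain kappa2: with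
   s = |v_ms|^2 and t = <v_ms, v_rep> it equals min (s/\<epsilon>) 1 * (1-\<epsilon>)s / max ((1-\<epsilon>)s) (-t),
   which is globally Lipschitz on s \<ge> 0. The second factor jumps at s = 0, but it changes by
   O((|\<Delta>s| + |\<Delta>t|) / s), and this is compensated by the first factor being at most s/\<epsilon>. *)

lemma locally_lipschitz_onE:
  assumes "locally_lipschitz_on X f" "x \<in> X"
  obtains e L where "e > 0" "L \<ge> 0" "L-lipschitz_on (cball x e \<inter> X) f"
  using assms lipschitz_on_nonneg unfolding locally_lipschitz_on_def by blast

lemma lipschitz_on_imp_locally_lipschitz_on:
  "L-lipschitz_on X f \<Longrightarrow> locally_lipschitz_on X f"
  unfolding locally_lipschitz_on_def by (blast intro: lipschitz_on_subset zero_less_one)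

lemma locally_lipschitz_on_const: "locally_lipschitz_on X (\<lambda>x. c)"
  by (rule lipschitz_on_imp_locally_lipschitz_on[OF lipschitz_on_constant])

lemma bounded_linear_imp_locally_lipschitz_on:
  assumes "bounded_linear f"
  shows "locally_lipschitz_on X f"
proof -
  obtain B where "B-lipschitz_on X f"
    using bounded_linear.lipschitz_boundE[OF assms] .
  then show ?thesis by (rule lipschitz_on_imp_locally_lipschitz_on)
qed

lemma locally_lipschitz_on_compose:
  assumes f: "locally_lipschitz_on X f" and g: "locally_lipschitz_on Y g" and "f ` X \<subseteq> Y"
  shows "locally_lipschitz_on X (\<lambda>x. g (f x))"
  unfolding locally_lipschitz_on_def
proof
  fix x assume "x \<in> X"
  obtain e1 L1 where e1: "e1 > 0" "L1 \<ge> 0" and L1: "L1-lipschitz_on (cball x e1 \<inter> X) f"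
    using locally_lipschitz_onE[OF f \<open>x \<in> X\<close>] .
  obtain e2 L2 where e2: "e2 > 0" and L2: "L2-lipschitz_on (cball (f x) e2 \<inter> Y) g"
    using locally_lipschitz_onE[OF g] \<open>x \<in> X\<close> \<open>f ` X \<subseteq> Y\<close> by blast
  define e where "e = min e1 (e2 / (L1 + 1))"
  have e: "e > 0" "e \<le> e1" "L1 * e \<le> e2"
    using e1 e2 by (auto simp: e_def min_def field_simps)
  have L1e: "L1-lipschitz_on (cball x e \<inter> X) f"
    by (rule lipschitz_on_subset[OF L1]) (use \<open>e \<le> e1\<close> in auto)
  have "f ` (cball x e \<inter> X) \<subseteq> cball (f x) e2 \<inter> Y"
  proof safe
    fix y assume y: "y \<in> cball x e" "y \<in> X"
    have "dist (f x) (f y) \<le> L1 * dist x y"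
      using lipschitz_onD[OF L1e] y \<open>x \<in> X\<close> e by simp
    also have "\<dots> \<le> L1 * e"
      using y e1 by (intro mult_left_mono) auto
    finally show "f y \<in> cball (f x) e2" using e by simp
  qed (use \<open>f ` X \<subseteq> Y\<close> in blast)
  then have "(L2 * L1)-lipschitz_on (cball x e \<inter> X) (\<lambda>x. g (f x))"
    using L1e L2 by (blast intro: lipschitz_on_compose2 lipschitz_on_subset)
  then show "\<exists>e>0. \<exists>L. L-lipschitz_on (cball x e \<inter> X) (\<lambda>x. g (f x))"
    using e by blast
qed

lemma locally_lipschitz_on_Pair:
  assumes f: "locally_lipschitz_on X f" and g: "locally_lipschitz_on X g"
  shows "locally_lipschitz_on X (\<lambda>x. (f x, g x))"
  unfolding locally_lipschitz_on_def
proof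
  fix x assume "x \<in> X"
  obtain e1 L1 e2 L2 where "e1 > 0" "L1-lipschitz_on (cball x e1 \<inter> X) f"
    and "e2 > 0" "L2-lipschitz_on (cball x e2 \<inter> X) g"
    using locally_lipschitz_onE[OF f \<open>x \<in> X\<close>] locally_lipschitz_onE[OF g \<open>x \<in> X\<close>] by metis
  moreover have "cball x (min e1 e2) \<inter> X \<subseteq> cball x e1 \<inter> X"
    and "cball x (min e1 e2) \<inter> X \<subseteq> cball x e2 \<inter> X"
    by auto
  ultimately have "(sqrt (L1\<^sup>2 + L2\<^sup>2))-lipschitz_on (cball x (min e1 e2) \<inter> X) (\<lambda>x. (f x, g x))"
    by (intro lipschitz_on_Pair) (blast intro: lipschitz_on_subset)+
  moreover have "min e1 e2 > 0" using \<open>e1 > 0\<close> \<open>e2 > 0\<close> by simp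
  ultimately show "\<exists>e>0. \<exists>L. L-lipschitz_on (cball x e \<inter> X) (\<lambda>x. (f x, g x))"
    by blast
qed

lemma locally_lipschitz_on_add:
  fixes f g :: "'a::metric_space \<Rightarrow> 'b::real_normed_vector"
  assumes "locally_lipschitz_on X f" "locally_lipschitz_on X g"
  shows "locally_lipschitz_on X (\<lambda>x. f x + g x)"
proof -
  have "bounded_linear (\<lambda>z::'b \<times> 'b. fst z + snd z)"
    by (intro bounded_linear_add bounded_linear_fst bounded_linear_snd)
  then have "locally_lipschitz_on UNIV (\<lambda>z::'b \<times> 'b. fst z + snd z)"
    by (rule bounded_linear_imp_locally_lipschitz_on)
  from locally_lipschitz_on_compose[OF locally_lipschitz_on_Pair[OF assms] this] show ?thesis
    by simp
qed

lemma locally_lipschitz_on_diff: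
  fixes f g :: "'a::metric_space \<Rightarrow> 'b::real_normed_vector"
  assumes "locally_lipschitz_on X f" "locally_lipschitz_on X g"
  shows "locally_lipschitz_on X (\<lambda>x. f x - g x)"
proof -
  have "bounded_linear (\<lambda>z::'b \<times> 'b. fst z - snd z)"
    by (intro bounded_linear_sub bounded_linear_fst bounded_linear_snd)
  then have "locally_lipschitz_on UNIV (\<lambda>z::'b \<times> 'b. fst z - snd z)"
    by (rule bounded_linear_imp_locally_lipschitz_on)
  from locally_lipschitz_on_compose[OF locally_lipschitz_on_Pair[OF assms] this] show ?thesis
    by simp
qed

lemma locally_lipschitz_on_sum:
  fixes f :: "'i \<Rightarrow> 'a::metric_space \<Rightarrow> 'b::real_normed_vector"
  assumes "finite I" "\<And>k. k \<in> I \<Longrightarrow> locally_lipschitz_on X (f k)"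
  shows "locally_lipschitz_on X (\<lambda>x. \<Sum>k\<in>I. f k x)"
  using assms
  by (induction I rule: finite_induct) (simp_all add: locally_lipschitz_on_const locally_lipschitz_on_add)

lemma bounded_bilinear_locally_lipschitz_on:
  assumes "bounded_bilinear pr"
  shows "locally_lipschitz_on UNIV (\<lambda>z. pr (fst z) (snd z))"
  unfolding locally_lipschitz_on_def
proof
  fix z0 :: "'a::real_normed_vector \<times> 'b::real_normed_vector"
  obtain K where K: "K > 0" "\<And>a b. norm (pr a b) \<le> norm a * norm b * K"
    using bounded_bilinear.pos_bounded[OF assms] by blast
  define L where "L = K * (norm (fst z0) + norm (snd z0) + 2)"
  have near: "norm (fst z) \<le> norm (fst z0) + 1" "norm (snd z) \<le> norm (snd z0) + 1"
    if "z \<in> cball z0 1" for z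
    using that dist_fst_le[of z0 z] dist_snd_le[of z0 z] norm_triangle_sub[of "fst z" "fst z0"]
      norm_triangle_sub[of "snd z" "snd z0"]
    by (simp_all add: dist_norm norm_minus_commute)
  have "L-lipschitz_on (cball z0 1 \<inter> UNIV) (\<lambda>z. pr (fst z) (snd z))"
  proof (rule lipschitz_onI)
    fix z w assume "z \<in> cball z0 1 \<inter> UNIV" "w \<in> cball z0 1 \<inter> UNIV"
    then have z: "z \<in> cball z0 1" and w: "w \<in> cball z0 1" by auto
    have split: "pr (fst z) (snd z) - pr (fst w) (snd w)
        = pr (fst z - fst w) (snd z) + pr (fst w) (snd z - snd w)"
      by (simp add: bounded_bilinear.diff_left[OF assms] bounded_bilinear.diff_right[OF assms])
    have "norm (pr (fst z - fst w) (snd z)) \<le> norm (fst z - fst w) * norm (snd z) * K"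
      by (rule K(2))
    also have "\<dots> \<le> dist z w * (norm (snd z0) + 1) * K"
      using dist_fst_le[of z w] near(2)[OF z] K(1)
      by (intro mult_right_mono mult_mono) (auto simp: dist_norm)
    finally have first: "norm (pr (fst z - fst w) (snd z)) \<le> dist z w * (norm (snd z0) + 1) * K" .
    have "norm (pr (fst w) (snd z - snd w)) \<le> norm (fst w) * norm (snd z - snd w) * K"
      by (rule K(2))
    also have "\<dots> \<le> (norm (fst z0) + 1) * dist z w * K"
      using dist_snd_le[of z w] near(1)[OF w] K(1)
      by (intro mult_right_mono mult_mono) (auto simp: dist_norm)
    finally have second: "norm (pr (fst w) (snd z - snd w)) \<le> (norm (fst z0) + 1) * dist z w * K" .
    have "dist (pr (fst z) (snd z)) (pr (fst w) (snd w))
        \<le> norm (pr (fst z - fst w) (snd z)) + norm (pr (fst w) (snd z - snd w))"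
      unfolding dist_norm split by (rule norm_triangle_ineq)
    also have "\<dots> \<le> L * dist z w"
      using first second by (simp add: L_def algebra_simps)
    finally show "dist (pr (fst z) (snd z)) (pr (fst w) (snd w)) \<le> L * dist z w" .
  qed (simp add: L_def K(1) less_imp_le)
  then show "\<exists>e>0. \<exists>L. L-lipschitz_on (cball z0 e \<inter> UNIV) (\<lambda>z. pr (fst z) (snd z))"
    by (blast intro: zero_less_one)
qed

lemma locally_lipschitz_on_bilinear:
  assumes "bounded_bilinear pr" "locally_lipschitz_on X f" "locally_lipschitz_on X g"
  shows "locally_lipschitz_on X (\<lambda>x. pr (f x) (g x))"
  using locally_lipschitz_on_compose[OF locally_lipschitz_on_Pair[OF assms(2,3)]
      bounded_bilinear_locally_lipschitz_on[OF assms(1)]]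
  by simp

lemmas locally_lipschitz_on_mult = locally_lipschitz_on_bilinear[OF bounded_bilinear_mult]
lemmas locally_lipschitz_on_scaleR = locally_lipschitz_on_bilinear[OF bounded_bilinear_scaleR]
lemmas locally_lipschitz_on_inner = locally_lipschitz_on_bilinear[OF bounded_bilinear_inner]

lemma locally_lipschitz_on_power2:
  fixes f :: "'a::metric_space \<Rightarrow> real"
  shows "locally_lipschitz_on X f \<Longrightarrow> locally_lipschitz_on X (\<lambda>x. (f x)\<^sup>2)"
  unfolding power2_eq_square by (rule locally_lipschitz_on_mult)

lemma locally_lipschitz_on_vec_nth: "locally_lipschitz_on X (\<lambda>x::'a::real_normed_vector ^ 'n. x $ i)"
  by (rule bounded_linear_imp_locally_lipschitz_on[OF bounded_linear_vec_nth])

lemma locally_lipschitz_on_norm: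
  fixes f :: "'a::metric_space \<Rightarrow> 'b::real_normed_vector"
  assumes "locally_lipschitz_on X f"
  shows "locally_lipschitz_on X (\<lambda>x. norm (f x))"
proof -
  have "1-lipschitz_on UNIV (norm :: 'b \<Rightarrow> real)"
    by (rule lipschitz_onI) (simp_all add: dist_norm norm_triangle_ineq3)
  then show ?thesis
    using locally_lipschitz_on_compose[OF assms lipschitz_on_imp_locally_lipschitz_on] by blast
qed

lemma locally_lipschitz_on_max_0:
  fixes f :: "'a::metric_space \<Rightarrow> real"
  assumes "locally_lipschitz_on X f"
  shows "locally_lipschitz_on X (\<lambda>x. max (f x) 0)"
proof -
  have "1-lipschitz_on UNIV (\<lambda>t::real. max t 0)"
    by (rule lipschitz_onI) (auto simp: dist_real_def max_def)
  then show ?thesis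
    using locally_lipschitz_on_compose[OF assms lipschitz_on_imp_locally_lipschitz_on] by blast
qed

lemma locally_lipschitz_on_exp:
  fixes f :: "'a::metric_space \<Rightarrow> real"
  assumes "locally_lipschitz_on X f"
  shows "locally_lipschitz_on X (\<lambda>x. exp (f x))"
proof -
  have "(exp (x + 1))-lipschitz_on (cball x 1 \<inter> UNIV) exp" for x :: real
  proof (rule lipschitz_on_leI)
    fix y z :: real assume "y \<in> cball x 1 \<inter> UNIV" "z \<in> cball x 1 \<inter> UNIV" "y \<le> z"
    have "exp z * (1 + (y - z)) \<le> exp z * exp (y - z)"
      by (intro mult_left_mono exp_ge_add_one_self) auto
    then have "exp z - exp y \<le> exp z * (z - y)"
      by (simp add: exp_diff algebra_simps)
    also have "\<dots> \<le> exp (x + 1) * (z - y)"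
      using \<open>z \<in> cball x 1 \<inter> UNIV\<close> \<open>y \<le> z\<close> by (intro mult_right_mono) (auto simp: dist_real_def)
    finally show "dist (exp y) (exp z) \<le> exp (x + 1) * dist y z"
      using \<open>y \<le> z\<close> by (simp add: dist_real_def)
  qed simp
  then have "locally_lipschitz_on UNIV (exp :: real \<Rightarrow> real)"
    unfolding locally_lipschitz_on_def by (blast intro: zero_less_one)
  then show ?thesis
    using locally_lipschitz_on_compose[OF assms] by blast
qed

lemma locally_lipschitz_on_inverse:
  fixes f :: "'a::metric_space \<Rightarrow> real"
  assumes "locally_lipschitz_on X f" "\<And>x. x \<in> X \<Longrightarrow> f x > 0"
  shows "locally_lipschitz_on X (\<lambda>x. inverse (f x))"
proof -
  have "(4 / x\<^sup>2)-lipschitz_on (cball x (x / 2) \<inter> {0<..}) inverse" if "x > 0" for x :: real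
  proof (rule lipschitz_onI)
    fix y z assume y: "y \<in> cball x (x / 2) \<inter> {0<..}" and z: "z \<in> cball x (x / 2) \<inter> {0<..}"
    then have "x / 2 \<le> y" "x / 2 \<le> z"
      by (auto simp: dist_real_def abs_if split: if_splits)
    then have "(x / 2) * (x / 2) \<le> y * z"
      using \<open>x > 0\<close> by (intro mult_mono) auto
    then have "\<bar>z - y\<bar> / (y * z) \<le> \<bar>z - y\<bar> / ((x / 2) * (x / 2))"
      using \<open>x > 0\<close> y z by (intro divide_left_mono) auto
    moreover have "dist (inverse y) (inverse z) = \<bar>z - y\<bar> / (y * z)"
      using y z by (simp add: dist_real_def field_simps abs_divide abs_mult)
    ultimately show "dist (inverse y) (inverse z) \<le> 4 / x\<^sup>2 * dist y z"
      by (simp add: dist_real_def power2_eq_square abs_minus_commute field_simps)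
  qed simp
  then have "locally_lipschitz_on {0<..} (inverse :: real \<Rightarrow> real)"
    unfolding locally_lipschitz_on_def by (metis greaterThan_iff half_gt_zero)
  then show ?thesis
    using locally_lipschitz_on_compose[OF assms(1)] assms(2) by blast
qed

definition kappa_gain :: "real \<Rightarrow> real \<Rightarrow> real \<Rightarrow> real" where
  "kappa_gain \<epsilon> s t = min (s / \<epsilon>) 1 * ((1 - \<epsilon>) * s / max ((1 - \<epsilon>) * s) (- t))"

lemma kappa2_eq_kappa_gain:
  assumes "0 < \<epsilon>" "\<epsilon> < 1"
  shows "kappa2 \<epsilon> v w = kappa_gain \<epsilon> ((norm v)\<^sup>2) (inner v w)"
proof (cases "v = 0")
  case True
  then show ?thesis by (simp add: kappa2_def kappa_gain_def)
next
  case False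
  define s t c where "s = (norm v)\<^sup>2" and "t = inner v w" and "c = 1 - \<epsilon>"
  have cs: "c * s > 0" using False assms by (simp add: s_def c_def)
  have "(if 0 \<le> t then 1 else min (- c * s / t) 1) = c * s / max (c * s) (- t)"
    using cs by (auto simp: min_def max_def field_simps)
  then show ?thesis
    by (auto simp: kappa2_def kappa_gain_def Let_def s_def t_def c_def)
qed

lemma abs_max_diff_le:
  fixes a b a' b' :: "'a::linordered_idom"
  shows "\<bar>max a b - max a' b'\<bar> \<le> \<bar>a - a'\<bar> + \<bar>b - b'\<bar>"
  by (simp add: max_def abs_if)

lemma scaled_ratio_diff_le:
  fixes c s1 s2 D1 D2 :: real
  assumes "0 < c" "0 < s2" "s2 \<le> s1" "c * s1 \<le> D1" "c * s2 \<le> D2"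
  shows "s2 * \<bar>c * s1 / D1 - c * s2 / D2\<bar> \<le> \<bar>s1 - s2\<bar> + \<bar>D1 - D2\<bar> / c"
proof -
  have "0 < c * s2" "c * s2 \<le> c * s1"
    using assms by simp_all
  then have D: "0 < D1" "0 < D2" "c * s2 \<le> D1"
    using assms by linarith+
  have a: "0 \<le> c * s2 / D1" "c * s2 / D1 \<le> 1" and b: "0 \<le> c * s2 / D2" "c * s2 / D2 \<le> 1"
    and d: "0 \<le> s2 / D1" "s2 / D1 \<le> 1 / c"
    using assms D by (simp_all add: field_simps)
  have first: "\<bar>(c * s2 / D1) * (s1 - s2)\<bar> \<le> \<bar>s1 - s2\<bar>"
    unfolding abs_mult using a by (intro mult_left_le_one_le) auto
  have second: "\<bar>(c * s2 / D2) * (s2 / D1) * (D2 - D1)\<bar> \<le> 1 * (1 / c) * \<bar>D1 - D2\<bar>"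
    unfolding abs_mult using b d assms(1) by (intro mult_mono) (auto simp: abs_minus_commute)
  have "s2 * \<bar>c * s1 / D1 - c * s2 / D2\<bar> = \<bar>s2 * (c * s1 / D1 - c * s2 / D2)\<bar>"
    using assms by (simp add: abs_mult)
  also have "s2 * (c * s1 / D1 - c * s2 / D2)
      = (c * s2 / D1) * (s1 - s2) + (c * s2 / D2) * (s2 / D1) * (D2 - D1)"
    using D by (simp add: field_simps)
  also have "\<bar>\<dots>\<bar> \<le> \<bar>(c * s2 / D1) * (s1 - s2)\<bar> + \<bar>(c * s2 / D2) * (s2 / D1) * (D2 - D1)\<bar>"
    by (rule abs_triangle_ineq)
  also have "\<dots> \<le> \<bar>s1 - s2\<bar> + \<bar>D1 - D2\<bar> / c"
    using first second by simp
  finally show ?thesis .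
qed

lemma scaled_max_ratio_diff_le:
  fixes c s1 s2 t1 t2 :: real
  assumes "0 < c" "0 \<le> s2" "s2 \<le> s1"
  shows "s2 * \<bar>c * s1 / max (c * s1) (- t1) - c * s2 / max (c * s2) (- t2)\<bar>
    \<le> 2 * \<bar>s1 - s2\<bar> + \<bar>t1 - t2\<bar> / c"
proof (cases "s2 = 0")
  case False
  have "\<bar>c * s1 - c * s2\<bar> = c * \<bar>s1 - s2\<bar>"
    using assms by (simp add: abs_mult flip: right_diff_distrib)
  then have "\<bar>max (c * s1) (- t1) - max (c * s2) (- t2)\<bar> \<le> c * \<bar>s1 - s2\<bar> + \<bar>t1 - t2\<bar>"
    using abs_max_diff_le[of "c * s1" "- t1" "c * s2" "- t2"] by (simp add: abs_minus_commute)
  then have "\<bar>max (c * s1) (- t1) - max (c * s2) (- t2)\<bar> / c \<le> \<bar>s1 - s2\<bar> + \<bar>t1 - t2\<bar> / c"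
    using assms by (simp add: field_simps)
  moreover have "s2 * \<bar>c * s1 / max (c * s1) (- t1) - c * s2 / max (c * s2) (- t2)\<bar>
      \<le> \<bar>s1 - s2\<bar> + \<bar>max (c * s1) (- t1) - max (c * s2) (- t2)\<bar> / c"
    using False assms by (intro scaled_ratio_diff_le) auto
  ultimately show ?thesis by linarith
qed (use assms in simp)

lemma kappa_gain_diff_le:
  assumes "0 < \<epsilon>" "\<epsilon> < 1" "0 \<le> s2" "s2 \<le> s1"
  shows "\<bar>kappa_gain \<epsilon> s1 t1 - kappa_gain \<epsilon> s2 t2\<bar>
    \<le> (3 * \<bar>s1 - s2\<bar> + \<bar>t1 - t2\<bar> / (1 - \<epsilon>)) / \<epsilon>"
proof -
  define c where "c = 1 - \<epsilon>"
  define h where "h s = min (s / \<epsilon>) 1" for s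
  define G where "G s t = c * s / max (c * s) (- t)" for s t
  have c: "c > 0" using assms by (simp add: c_def)
  have gain: "kappa_gain \<epsilon> s t = h s * G s t" for s t
    by (simp add: kappa_gain_def h_def G_def c_def)
  have G: "0 \<le> G s1 t1 \<and> G s1 t1 \<le> 1"
  proof (cases "s1 = 0")
    case False
    then have "0 < c * s1" "c * s1 \<le> max (c * s1) (- t1)"
      using c assms by simp_all
    then show ?thesis by (simp add: G_def)
  qed (simp add: G_def)
  have h: "0 \<le> h s2" "h s2 \<le> s2 / \<epsilon>" "\<bar>h s1 - h s2\<bar> \<le> \<bar>s1 - s2\<bar> / \<epsilon>"
    using assms by (auto simp: h_def min_def abs_if field_simps)
  have first: "\<bar>h s1 - h s2\<bar> * G s1 t1 \<le> \<bar>s1 - s2\<bar> / \<epsilon>"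
    using mult_left_le[OF conjunct2[OF G] abs_ge_zero[of "h s1 - h s2"]] h(3) by linarith
  have "h s2 * \<bar>G s1 t1 - G s2 t2\<bar> \<le> s2 / \<epsilon> * \<bar>G s1 t1 - G s2 t2\<bar>"
    using h(2) by (rule mult_right_mono) simp
  also have "\<dots> = s2 * \<bar>G s1 t1 - G s2 t2\<bar> / \<epsilon>"
    by simp
  also have "\<dots> \<le> (2 * \<bar>s1 - s2\<bar> + \<bar>t1 - t2\<bar> / c) / \<epsilon>"
    unfolding G_def using c assms by (intro divide_right_mono scaled_max_ratio_diff_le) auto
  finally have second: "h s2 * \<bar>G s1 t1 - G s2 t2\<bar> \<le> (2 * \<bar>s1 - s2\<bar> + \<bar>t1 - t2\<bar> / c) / \<epsilon>" .
  have "kappa_gain \<epsilon> s1 t1 - kappa_gain \<epsilon> s2 t2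
      = (h s1 - h s2) * G s1 t1 + h s2 * (G s1 t1 - G s2 t2)"
    by (simp add: gain algebra_simps)
  also have "\<bar>\<dots>\<bar> \<le> \<bar>h s1 - h s2\<bar> * G s1 t1 + h s2 * \<bar>G s1 t1 - G s2 t2\<bar>"
    using G h(1) abs_triangle_ineq[of "(h s1 - h s2) * G s1 t1" "h s2 * (G s1 t1 - G s2 t2)"]
    by (simp add: abs_mult)
  also have "\<dots> \<le> \<bar>s1 - s2\<bar> / \<epsilon> + (2 * \<bar>s1 - s2\<bar> + \<bar>t1 - t2\<bar> / c) / \<epsilon>"
    using first second by (rule add_mono)
  also have "\<dots> = (3 * \<bar>s1 - s2\<bar> + \<bar>t1 - t2\<bar> / (1 - \<epsilon>)) / \<epsilon>"
    by (simp add: c_def add_divide_distrib[symmetric])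
  finally show ?thesis .
qed

lemma kappa_gain_lipschitz_on:
  assumes "0 < \<epsilon>" "\<epsilon> < 1"
  shows "((3 + 1 / (1 - \<epsilon>)) / \<epsilon>)-lipschitz_on ({0..} \<times> UNIV) (\<lambda>z. kappa_gain \<epsilon> (fst z) (snd z))"
proof (rule lipschitz_onI)
  fix z w :: "real \<times> real" assume "z \<in> {0..} \<times> UNIV" "w \<in> {0..} \<times> UNIV"
  then have "0 \<le> fst z" "0 \<le> fst w" by auto
  then have "\<bar>kappa_gain \<epsilon> (fst z) (snd z) - kappa_gain \<epsilon> (fst w) (snd w)\<bar>
      \<le> (3 * \<bar>fst z - fst w\<bar> + \<bar>snd z - snd w\<bar> / (1 - \<epsilon>)) / \<epsilon>"
  proof (cases "fst w \<le> fst z")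
    case False
    then show ?thesis
      using kappa_gain_diff_le[OF assms \<open>0 \<le> fst z\<close>, of "fst w" "snd w" "snd z"]
      by (simp add: abs_minus_commute)
  qed (rule kappa_gain_diff_le[OF assms])
  also have "\<dots> \<le> (3 * dist z w + dist z w / (1 - \<epsilon>)) / \<epsilon>"
    using dist_fst_le[of z w] dist_snd_le[of z w] assms
    by (intro divide_right_mono add_mono divide_right_mono) (auto simp: dist_real_def)
  finally show "dist (kappa_gain \<epsilon> (fst z) (snd z)) (kappa_gain \<epsilon> (fst w) (snd w))
      \<le> (3 + 1 / (1 - \<epsilon>)) / \<epsilon> * dist z w"
    by (simp add: dist_real_def field_simps)
qed (use assms in simp)

lemma locally_lipschitz_on_kappa_gain:
  fixes f g :: "'a::metric_space \<Rightarrow> real"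
  assumes "0 < \<epsilon>" "\<epsilon> < 1" "locally_lipschitz_on X f" "locally_lipschitz_on X g"
    and "\<And>x. x \<in> X \<Longrightarrow> 0 \<le> f x"
  shows "locally_lipschitz_on X (\<lambda>x. kappa_gain \<epsilon> (f x) (g x))"
  using locally_lipschitz_on_compose[OF locally_lipschitz_on_Pair[OF assms(3,4)]
      lipschitz_on_imp_locally_lipschitz_on[OF kappa_gain_lipschitz_on[OF assms(1,2)]]] assms(5)
  by auto

lemma locally_lipschitz_on_divide:
  fixes f g :: "'a::metric_space \<Rightarrow> real"
  assumes "locally_lipschitz_on X f" "locally_lipschitz_on X g" "\<And>x. x \<in> X \<Longrightarrow> g x > 0"
  shows "locally_lipschitz_on X (\<lambda>x. f x / g x)"
  unfolding divide_inverse by (intro locally_lipschitz_on_mult locally_lipschitz_on_inverse assms)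

lemma mass_pos: "0 < mass \<beta> q p k"
  unfolding mass_def by (intro mult_pos_pos sum_pos) auto

lemma locally_lipschitz_on_mass: "locally_lipschitz_on X (\<lambda>p. mass \<beta> q p k)"
  unfolding mass_def
  by (intro locally_lipschitz_on_mult locally_lipschitz_on_const locally_lipschitz_on_sum
      locally_lipschitz_on_exp locally_lipschitz_on_power2 locally_lipschitz_on_norm
      locally_lipschitz_on_diff locally_lipschitz_on_vec_nth finite)

lemma locally_lipschitz_on_v_ms: "locally_lipschitz_on X (\<lambda>p. v_ms \<beta> \<sigma>1 q p i)"
proof -
  have weight: "locally_lipschitz_on X
      (\<lambda>p. inverse (mass \<beta> q p k) * exp (- \<beta> * (norm (q k - p $ i))\<^sup>2))" for k
    by (intro locally_lipschitz_on_mult locally_lipschitz_on_inverse locally_lipschitz_on_mass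
        locally_lipschitz_on_exp locally_lipschitz_on_power2 locally_lipschitz_on_norm
        locally_lipschitz_on_diff locally_lipschitz_on_vec_nth locally_lipschitz_on_const mass_pos)
  have "0 < (\<Sum>k\<in>UNIV. inverse (mass \<beta> q p k) * exp (- \<beta> * (norm (q k - p $ i))\<^sup>2))" for p
    by (intro sum_pos mult_pos_pos positive_imp_inverse_positive mass_pos) auto
  then show ?thesis
    unfolding v_ms_def
    by (intro locally_lipschitz_on_scaleR locally_lipschitz_on_divide locally_lipschitz_on_sum
        locally_lipschitz_on_const locally_lipschitz_on_diff locally_lipschitz_on_vec_nth weight finite)
qed

(* The weight r - d vanishes at the cutoff distance d = r, and the term j = i is 0 anyway. *)
lemma v_rep_eq_sum_UNIV:
  "v_rep \<sigma>2 \<epsilon> r p i = \<sigma>2 *\<^sub>R (\<Sum>j\<in>UNIV.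
     (max (r - norm (p $ i - p $ j)) 0 / (norm (p $ i - p $ j) + \<epsilon>)) *\<^sub>R (p $ i - p $ j))"
  unfolding v_rep_def by (intro arg_cong[where f = "scaleR \<sigma>2"] sum.mono_neutral_cong_left) auto

lemma locally_lipschitz_on_v_rep:
  assumes "0 < \<epsilon>"
  shows "locally_lipschitz_on X (\<lambda>p. v_rep \<sigma>2 \<epsilon> r p i)"
  unfolding v_rep_eq_sum_UNIV using assms
  by (intro locally_lipschitz_on_scaleR locally_lipschitz_on_sum locally_lipschitz_on_divide
      locally_lipschitz_on_max_0 locally_lipschitz_on_add locally_lipschitz_on_norm
      locally_lipschitz_on_const locally_lipschitz_on_diff locally_lipschitz_on_vec_nth finite)
    (auto intro: add_nonneg_pos)

theorem lemma6:
  fixes q :: "'m::finite \<Rightarrow> 'a::euclidean_space"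
    and \<beta> \<sigma>1 \<sigma>2 \<epsilon> r_avoid :: real
    and i :: "'n::finite"
  assumes "CARD('n) \<ge> 2"
    and "\<beta> > 0" and "\<sigma>1 > 0" and "\<sigma>2 > 0"
    and "0 < \<epsilon>" and "\<epsilon> < 1" and "r_avoid > 0"
  shows "locally_lipschitz_on (UNIV :: ('a ^ 'n) set)
           (\<lambda>p. v_cv \<beta> \<sigma>1 \<sigma>2 \<epsilon> r_avoid q p i)"
proof -
  let ?ms = "\<lambda>p::'a ^ 'n. v_ms \<beta> \<sigma>1 q p i" and ?rep = "\<lambda>p::'a ^ 'n. v_rep \<sigma>2 \<epsilon> r_avoid p i"
  have v_cv_eq: "v_cv \<beta> \<sigma>1 \<sigma>2 \<epsilon> r_avoid q p i
      = kappa_gain \<epsilon> ((norm (?ms p))\<^sup>2) (inner (?ms p) (?rep p)) *\<^sub>R ?rep p" for p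
    by (simp only: v_cv_def kappa2_eq_kappa_gain[OF \<open>0 < \<epsilon>\<close> \<open>\<epsilon> < 1\<close>])
  have "locally_lipschitz_on UNIV
      (\<lambda>p. kappa_gain \<epsilon> ((norm (?ms p))\<^sup>2) (inner (?ms p) (?rep p)) *\<^sub>R ?rep p)"
    by (intro locally_lipschitz_on_scaleR locally_lipschitz_on_kappa_gain locally_lipschitz_on_power2
        locally_lipschitz_on_norm locally_lipschitz_on_inner locally_lipschitz_on_v_ms
        locally_lipschitz_on_v_rep \<open>0 < \<epsilon>\<close> \<open>\<epsilon> < 1\<close>) simp
  then show ?thesis
    by (simp only: v_cv_eq)
qed

end
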